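(* Let $I=\{1,\dots,k+\ell\}\subseteq V$ where $C_1=\{1,\dots,k\}$ and $C_2=\{k+1,\dots,k+\ell\}$ are disjoint cliques of $G$ such that at least one vertex of $C_1$ and one vertex of $C_2$ are nonadjacent (edges between $C_1$ and $C_2$ may otherwise be arbitrary). Let $X_I$ be a symmetric matrix with $X_I\succeq 0$, $X_I\geq 0$ (entrywise), diagonal entries $x_1,\dots,x_{k+\ell}$, and $(X_I)_{i,j}=0$ for every edge $[i,j]$ of $G_I$ (in particular for distinct $i,j$ in the same clique). Then $X_I\in\mathrm{STAB}^2(G_I)$ if and only if $$\sum_{j=1}^{\ell}X_{i,k+j}\leq x_i\ (1\leq i\leq k),\qquad \sum_{i=1}^{k}X_{i,k+j}\leq x_{k+j}\ (1\leq j\leq \ell),\qquad \sum_{i=1}^{k+\ell}x_i\leq 1+\sum_{i=1}^k\sum_{j=1}^{\ell}X_{i,k+j}.$$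
   Context: Let $G$ be a simple graph with vertex set $V=\{1,\dots,n\}$ and edge set $E$; $G_I$ denotes the subgraph induced by $I\subseteq V$. For a graph $H$ with vertex set $I$, let $S(H)=\{s\in\{0,1\}^I: s_is_j=0\ \forall [i,j]\in E(H)\}$ (incidence vectors of stable sets, including the zero vector) and $\mathrm{STAB}^2(H)=\operatorname{conv}\{ss^T: s\in S(H)\}$. *)

theory Defs
  imports "HOL-Analysis.Analysis"
begin

definition simple_graph :: "nat set \<Rightarrow> (nat \<Rightarrow> nat \<Rightarrow> bool) \<Rightarrow> bool" where
  "simple_graph V E \<longleftrightarrow> (\<forall>i j. E i j \<longrightarrow> i \<in> V \<and> j \<in> V \<and> i \<noteq> j \<and> E j i)"

definition stable_vecs :: "(nat \<Rightarrow> nat \<Rightarrow> bool) \<Rightarrow> nat set \<Rightarrow> (nat \<Rightarrow> real) set" where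
  "stable_vecs E I = {s. (\<forall>i\<in>I. s i = 0 \<or> s i = 1) \<and> (\<forall>i. i \<notin> I \<longrightarrow> s i = 0)
                         \<and> (\<forall>i\<in>I. \<forall>j\<in>I. E i j \<longrightarrow> s i * s j = 0)}"

text \<open>STAB^2(G_I) = conv{s s^T : s in S(G_I)}, as a set of I x I matrices
  (a matrix X :: nat => nat => real is considered only through its entries indexed by I x I).\<close>
definition in_STAB2 :: "(nat \<Rightarrow> nat \<Rightarrow> bool) \<Rightarrow> nat set \<Rightarrow> (nat \<Rightarrow> nat \<Rightarrow> real) \<Rightarrow> bool" where
  "in_STAB2 E I X \<longleftrightarrow> (\<exists>F w. finite F \<and> F \<subseteq> stable_vecs E I \<and> (\<forall>s\<in>F. w s \<ge> (0::real))
      \<and> sum w F = 1 \<and> (\<forall>i\<in>I. \<forall>j\<in>I. X i j = (\<Sum>s\<in>F. w s * (s i * s j))))"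

definition psd_on :: "nat set \<Rightarrow> (nat \<Rightarrow> nat \<Rightarrow> real) \<Rightarrow> bool" where
  "psd_on I X \<longleftrightarrow> (\<forall>v :: nat \<Rightarrow> real. (\<Sum>i\<in>I. \<Sum>j\<in>I. v i * X i j * v j) \<ge> 0)"

end

theory Submission
  imports Defs
begin

text \<open>A stable set meets each of the cliques \<open>C\<^sub>1\<close>, \<open>C\<^sub>2\<close> in at most one vertex. So for
  \<open>s \<in> S(G\<^sub>I)\<close> with \<open>a = s(C\<^sub>1)\<close>, \<open>b = s(C\<^sub>2)\<close> in \<open>{0,1}\<close> the three inequalities for \<open>s s\<^sup>T\<close>
  read \<open>s\<^sub>i b \<le> s\<^sub>i\<close>, \<open>a s\<^sub>j \<le> s\<^sub>j\<close> and \<open>a + b \<le> 1 + a b\<close>; being linear in the matrix they pass to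
  the convex hull. Conversely, \<open>X\<^sub>I\<close> is an explicit convex combination: each cross entry
  \<open>X\<^sub>u\<^sub>v\<close> (\<open>u \<in> C\<^sub>1\<close>, \<open>v \<in> C\<^sub>2\<close> nonadjacent) is the weight of the stable set \<open>{u,v}\<close>, the slacks
  of the first two families of inequalities are the weights of the singletons, and the last
  inequality says that these weights sum to at most 1, the rest going to the empty set.\<close>

lemma stable_vecs_01:
  assumes "s \<in> stable_vecs E I" "i \<in> I"
  shows "s i = 0 \<or> s i = 1"
  using assms unfolding stable_vecs_def by blast

lemma stable_vec_square:
  assumes "s \<in> stable_vecs E I" "i \<in> I"
  shows "s i * s i = s i"
  using stable_vecs_01[OF assms] by auto

lemma sum_stable_vec_clique_le_1:
  assumes s: "s \<in> stable_vecs E I" and "C \<subseteq> I" "finite C"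
    and clique: "\<forall>u\<in>C. \<forall>v\<in>C. u \<noteq> v \<longrightarrow> E u v"
  shows "sum s C \<le> 1"
proof (cases "\<exists>c\<in>C. s c \<noteq> 0")
  case True
  then obtain c where c: "c \<in> C" "s c \<noteq> 0" by blast
  then have "s c = 1" using stable_vecs_01[OF s, of c] \<open>C \<subseteq> I\<close> by auto
  have "s d = 0" if "d \<in> C - {c}" for d
  proof -
    have "E c d" using clique c(1) that by auto
    then have "s c * s d = 0" using s c that \<open>C \<subseteq> I\<close> unfolding stable_vecs_def by blast
    then show ?thesis using \<open>s c = 1\<close> by simp
  qed
  then have "sum s C = s c" using \<open>finite C\<close> c(1) by (simp add: sum.remove)
  then show ?thesis using \<open>s c = 1\<close> by simp
next
  case False
  then show ?thesis by simp
qed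

lemma stable_vec_row_sum_clique_le:
  assumes s: "s \<in> stable_vecs E I" and "u \<in> I" "C \<subseteq> I" "finite C"
    and clique: "\<forall>u\<in>C. \<forall>v\<in>C. u \<noteq> v \<longrightarrow> E u v"
  shows "(\<Sum>v\<in>C. s u * s v) \<le> s u * s u"
proof -
  have "(\<Sum>v\<in>C. s u * s v) = s u * sum s C" by (simp add: sum_distrib_left)
  also have "\<dots> \<le> s u * 1"
    using stable_vecs_01[OF s \<open>u \<in> I\<close>] sum_stable_vec_clique_le_1[OF assms(1,3,4) clique]
    by (intro mult_left_mono) auto
  finally show ?thesis using stable_vec_square[OF s \<open>u \<in> I\<close>] by linarith
qed

lemma stable_vec_two_cliques_diagonal_le:
  assumes s: "s \<in> stable_vecs E (C1 \<union> C2)" and "finite C1" "finite C2" "C1 \<inter> C2 = {}"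
    and clique1: "\<forall>u\<in>C1. \<forall>v\<in>C1. u \<noteq> v \<longrightarrow> E u v"
    and clique2: "\<forall>u\<in>C2. \<forall>v\<in>C2. u \<noteq> v \<longrightarrow> E u v"
  shows "(\<Sum>i\<in>C1 \<union> C2. s i * s i) \<le> 1 + (\<Sum>u\<in>C1. \<Sum>v\<in>C2. s u * s v)"
proof -
  have le1: "sum s C1 \<le> 1" "sum s C2 \<le> 1"
    using sum_stable_vec_clique_le_1[OF s] assms by auto
  have "(\<Sum>i\<in>C1 \<union> C2. s i * s i) = sum s (C1 \<union> C2)"
    using stable_vec_square[OF s] by (intro sum.cong) auto
  also have "\<dots> = sum s C1 + sum s C2"
    using assms(2-4) by (rule sum.union_disjoint)
  also have "\<dots> \<le> 1 + sum s C1 * sum s C2"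
    using mult_nonneg_nonneg[of "1 - sum s C1" "1 - sum s C2"] le1
    by (simp add: algebra_simps)
  finally show ?thesis by (simp add: sum_product)
qed

lemma in_STAB2_valid_inequality:
  assumes "in_STAB2 E I X" "p ` A \<subseteq> I" "p' ` A \<subseteq> I" "q ` B \<subseteq> I" "q' ` B \<subseteq> I"
    and valid: "\<And>s. s \<in> stable_vecs E I \<Longrightarrow>
      (\<Sum>a\<in>A. s (p a) * s (p' a)) \<le> b + (\<Sum>c\<in>B. s (q c) * s (q' c))"
  shows "(\<Sum>a\<in>A. X (p a) (p' a)) \<le> b + (\<Sum>c\<in>B. X (q c) (q' c))"
proof -
  obtain F w where F: "F \<subseteq> stable_vecs E I" and w0: "\<forall>s\<in>F. w s \<ge> 0" and w1: "sum w F = 1"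
    and Xe: "\<forall>i\<in>I. \<forall>j\<in>I. X i j = (\<Sum>s\<in>F. w s * (s i * s j))"
    using assms(1) unfolding in_STAB2_def by blast
  have "(\<Sum>a\<in>A. X (p a) (p' a)) = (\<Sum>s\<in>F. w s * (\<Sum>a\<in>A. s (p a) * s (p' a)))"
    using Xe assms(2,3) by (simp add: image_subset_iff sum_distrib_left sum.swap[of _ F])
  also have "\<dots> \<le> (\<Sum>s\<in>F. w s * (b + (\<Sum>c\<in>B. s (q c) * s (q' c))))"
    using w0 F valid by (intro sum_mono mult_left_mono) auto
  also have "\<dots> = b + (\<Sum>c\<in>B. X (q c) (q' c))"
    using Xe assms(4,5) w1
    by (simp add: image_subset_iff distrib_left sum.distrib sum_distrib_left sum.swap[of _ F]
        flip: sum_distrib_right)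
  finally show ?thesis .
qed

lemma in_STAB2_two_cliques_necessary:
  assumes X: "in_STAB2 E (C1 \<union> C2) X" and fin: "finite C1" "finite C2" and "C1 \<inter> C2 = {}"
    and clique1: "\<forall>u\<in>C1. \<forall>v\<in>C1. u \<noteq> v \<longrightarrow> E u v"
    and clique2: "\<forall>u\<in>C2. \<forall>v\<in>C2. u \<noteq> v \<longrightarrow> E u v"
  shows "(\<forall>u\<in>C1. (\<Sum>v\<in>C2. X u v) \<le> X u u)"
    and "(\<forall>v\<in>C2. (\<Sum>u\<in>C1. X u v) \<le> X v v)"
    and "(\<Sum>i\<in>C1 \<union> C2. X i i) \<le> 1 + (\<Sum>u\<in>C1. \<Sum>v\<in>C2. X u v)"
proof -
  show "\<forall>u\<in>C1. (\<Sum>v\<in>C2. X u v) \<le> X u u"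
  proof
    fix u assume "u \<in> C1"
    have "(\<Sum>v\<in>C2. s u * s v) \<le> 0 + (\<Sum>c\<in>{u}. s c * s c)" if "s \<in> stable_vecs E (C1 \<union> C2)" for s
      using stable_vec_row_sum_clique_le[OF that _ _ fin(2) clique2] \<open>u \<in> C1\<close> by simp
    from in_STAB2_valid_inequality[where p="\<lambda>_. u" and p'="\<lambda>i. i" and q="\<lambda>i. i" and q'="\<lambda>i. i", OF X _ _ _ _ this]
    show "(\<Sum>v\<in>C2. X u v) \<le> X u u" using \<open>u \<in> C1\<close> by (simp add: image_subset_iff)
  qed
  show "\<forall>v\<in>C2. (\<Sum>u\<in>C1. X u v) \<le> X v v"
  proof
    fix v assume "v \<in> C2"
    have "(\<Sum>u\<in>C1. s u * s v) \<le> 0 + (\<Sum>c\<in>{v}. s c * s c)" if "s \<in> stable_vecs E (C1 \<union> C2)" for s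
      using stable_vec_row_sum_clique_le[OF that _ _ fin(1) clique1, of v] \<open>v \<in> C2\<close>
      by (simp add: mult.commute)
    from in_STAB2_valid_inequality[where p="\<lambda>i. i" and p'="\<lambda>_. v" and q="\<lambda>i. i" and q'="\<lambda>i. i", OF X _ _ _ _ this]
    show "(\<Sum>u\<in>C1. X u v) \<le> X v v" using \<open>v \<in> C2\<close> by (simp add: image_subset_iff)
  qed
  have "(\<Sum>i\<in>C1 \<union> C2. s i * s i) \<le> 1 + (\<Sum>c\<in>C1 \<times> C2. s (fst c) * s (snd c))"
    if "s \<in> stable_vecs E (C1 \<union> C2)" for s
    using stable_vec_two_cliques_diagonal_le[OF that assms(2-6)]
    by (simp add: sum.cartesian_product case_prod_beta)
  from in_STAB2_valid_inequality[where p="\<lambda>i. i" and p'="\<lambda>i. i" and q=fst and q'=snd, OF X _ _ _ _ this]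
  show "(\<Sum>i\<in>C1 \<union> C2. X i i) \<le> 1 + (\<Sum>u\<in>C1. \<Sum>v\<in>C2. X u v)"
    by (simp add: sum.cartesian_product case_prod_beta)
qed

lemma in_STAB2_of_convex_combination:
  assumes "finite T" "\<forall>t\<in>T. v t \<in> stable_vecs E I" "\<forall>t\<in>T. c t \<ge> 0" "sum c T = 1"
    and X: "\<forall>i\<in>I. \<forall>j\<in>I. X i j = (\<Sum>t\<in>T. c t * (v t i * v t j))"
  shows "in_STAB2 E I X"
proof -
  define w where "w s = sum c {t\<in>T. v t = s}" for s
  have "\<forall>i\<in>I. \<forall>j\<in>I. X i j = (\<Sum>s\<in>v ` T. w s * (s i * s j))"
  proof (intro ballI)
    fix i j assume "i \<in> I" "j \<in> I"
    then have "X i j = (\<Sum>s\<in>v ` T. \<Sum>t\<in>{t\<in>T. v t = s}. c t * (v t i * v t j))"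
      using X sum.image_gen[OF \<open>finite T\<close>, of "\<lambda>t. c t * (v t i * v t j)" v] by simp
    also have "\<dots> = (\<Sum>s\<in>v ` T. w s * (s i * s j))"
      unfolding w_def sum_distrib_right by (intro sum.cong refl) auto
    finally show "X i j = (\<Sum>s\<in>v ` T. w s * (s i * s j))" .
  qed
  moreover have "sum w (v ` T) = 1"
    using sum.image_gen[OF \<open>finite T\<close>, of c v] assms(4) unfolding w_def by simp
  moreover have "\<forall>s\<in>v ` T. w s \<ge> 0"
    unfolding w_def using assms(3) by (auto intro: sum_nonneg)
  ultimately show ?thesis
    unfolding in_STAB2_def using assms(1,2) by (intro exI[of _ "v ` T"] exI[of _ w]) auto
qed

text \<open>The missing weight goes to the zero vector, the incidence vector of the empty stable set.\<close>
lemma in_STAB2_of_subconvex_combination: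
  assumes "finite T" "\<forall>t\<in>T. v t \<in> stable_vecs E I" "\<forall>t\<in>T. c t \<ge> 0" "sum c T \<le> 1"
    and X: "\<forall>i\<in>I. \<forall>j\<in>I. X i j = (\<Sum>t\<in>T. c t * (v t i * v t j))"
  shows "in_STAB2 E I X"
proof (rule in_STAB2_of_convex_combination)
  let ?T = "insert None (Some ` T)"
  let ?v = "case_option (\<lambda>_. 0) v" and ?c = "case_option (1 - sum c T) c"
  have "None \<notin> Some ` T" by auto
  then show "finite ?T" "sum ?c ?T = 1"
    and "\<forall>i\<in>I. \<forall>j\<in>I. X i j = (\<Sum>t\<in>?T. ?c t * (?v t i * ?v t j))"
    using assms(1) X by (simp_all add: sum.reindex)
  show "\<forall>t\<in>?T. ?v t \<in> stable_vecs E I"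
    using assms(2) by (auto simp: stable_vecs_def)
  show "\<forall>t\<in>?T. ?c t \<ge> 0"
    using assms(3,4) by auto
qed

lemma indicator_in_stable_vecs:
  assumes "S \<subseteq> I" "\<forall>i\<in>S. \<forall>j\<in>S. \<not> E i j"
  shows "indicator S \<in> stable_vecs E I"
  using assms unfolding stable_vecs_def indicator_def by auto

lemma sum_pair_indicator_products:
  fixes Y :: "nat \<Rightarrow> nat \<Rightarrow> real"
  assumes "finite C1" "finite C2" "C1 \<inter> C2 = {}" "p \<in> C1 \<union> C2" "q \<in> C1 \<union> C2"
  shows "(\<Sum>(u,v)\<in>C1 \<times> C2. Y u v * (indicator {u,v} p * indicator {u,v} q)) =
    (if p = q then (if p \<in> C1 then \<Sum>v\<in>C2. Y p v else \<Sum>u\<in>C1. Y u p)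
     else if p \<in> C1 \<and> q \<in> C2 then Y p q else if p \<in> C2 \<and> q \<in> C1 then Y q p else 0)"
proof -
  let ?P = "{(u,v) \<in> C1 \<times> C2. p \<in> {u,v} \<and> q \<in> {u,v}}"
  have "(\<Sum>(u,v)\<in>C1 \<times> C2. Y u v * (indicator {u,v} p * indicator {u,v} q)) = (\<Sum>(u,v)\<in>?P. Y u v)"
    using assms(1,2) by (intro sum.mono_neutral_cong_right) (auto simp: indicator_def)
  moreover consider "p = q" "p \<in> C1" | "p = q" "p \<in> C2" | "p \<in> C1" "q \<in> C2" | "p \<in> C2" "q \<in> C1"
    | "p \<noteq> q" "{p,q} \<subseteq> C1 \<or> {p,q} \<subseteq> C2"
    using assms(4,5) by blast
  then have "(\<Sum>(u,v)\<in>?P. Y u v) = (if p = q then (if p \<in> C1 then \<Sum>v\<in>C2. Y p v else \<Sum>u\<in>C1. Y u p)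
     else if p \<in> C1 \<and> q \<in> C2 then Y p q else if p \<in> C2 \<and> q \<in> C1 then Y q p else 0)"
  proof cases
    case 1
    then have "?P = {p} \<times> C2" using assms(3) by auto
    then show ?thesis using 1 by (simp add: sum.cartesian_product[symmetric])
  next
    case 2
    then have "?P = C1 \<times> {p}" using assms(3) by auto
    then show ?thesis using 2 assms(3) by (auto simp add: sum.cartesian_product[symmetric])
  next
    case 3
    then have "?P = {(p,q)}" using assms(3) by auto
    then show ?thesis using 3 assms(3) by auto
  next
    case 4
    then have "?P = {(q,p)}" using assms(3) by auto
    then show ?thesis using 4 assms(3) by auto
  next
    case 5
    then have "?P = {}" using assms(3) by auto
    then show ?thesis using 5 assms(3) by (simp only: sum.empty) auto
  qed
  ultimately show ?thesis by simp
qed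

definition row_slack :: "nat set \<Rightarrow> nat set \<Rightarrow> (nat \<Rightarrow> nat \<Rightarrow> real) \<Rightarrow> nat \<Rightarrow> real" where
  "row_slack C1 C2 X i = X i i - (if i \<in> C1 then \<Sum>v\<in>C2. X i v else \<Sum>u\<in>C1. X u i)"

lemma sum_row_slack:
  assumes "finite C1" "finite C2" "C1 \<inter> C2 = {}"
  shows "sum (row_slack C1 C2 X) (C1 \<union> C2) = (\<Sum>i\<in>C1 \<union> C2. X i i) - 2 * (\<Sum>u\<in>C1. \<Sum>v\<in>C2. X u v)"
proof -
  have "sum (row_slack C1 C2 X) C1 = (\<Sum>u\<in>C1. X u u) - (\<Sum>u\<in>C1. \<Sum>v\<in>C2. X u v)"
    unfolding row_slack_def by (simp add: sum_subtractf)
  moreover have "sum (row_slack C1 C2 X) C2 = (\<Sum>v\<in>C2. X v v) - (\<Sum>v\<in>C2. \<Sum>u\<in>C1. X u v)"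
    unfolding row_slack_def sum_subtractf[symmetric] using assms(3) by (intro sum.cong) auto
  ultimately show ?thesis
    using sum.union_disjoint[OF assms, of "row_slack C1 C2 X"] sum.union_disjoint[OF assms, of "\<lambda>i. X i i"]
      sum.swap[of "\<lambda>u v. X u v" C2 C1]
    by linarith
qed

lemma two_cliques_entry_decomposition:
  assumes "C1 \<inter> C2 = {}" and p: "p \<in> C1 \<union> C2" and q: "q \<in> C1 \<union> C2"
    and clique1: "\<forall>u\<in>C1. \<forall>v\<in>C1. u \<noteq> v \<longrightarrow> E u v"
    and clique2: "\<forall>u\<in>C2. \<forall>v\<in>C2. u \<noteq> v \<longrightarrow> E u v"
    and sym: "\<forall>i\<in>C1 \<union> C2. \<forall>j\<in>C1 \<union> C2. X i j = X j i"
    and zero: "\<forall>i\<in>C1 \<union> C2. \<forall>j\<in>C1 \<union> C2. E i j \<longrightarrow> X i j = 0"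
  shows "X p q = (if p = q then row_slack C1 C2 X p else 0)
    + (if p = q then (if p \<in> C1 then \<Sum>v\<in>C2. X p v else \<Sum>u\<in>C1. X u p)
       else if p \<in> C1 \<and> q \<in> C2 then X p q else if p \<in> C2 \<and> q \<in> C1 then X q p else 0)"
proof -
  consider "p = q" | "p \<in> C1" "q \<in> C2" | "p \<in> C2" "q \<in> C1"
    | "p \<noteq> q" "{p,q} \<subseteq> C1 \<or> {p,q} \<subseteq> C2"
    using p q by blast
  then show ?thesis
  proof cases
    case 4
    then have "E p q" using clique1 clique2 by auto
    then show ?thesis using 4 zero p q assms(1) by auto
  qed (use assms(1) sym in \<open>auto simp: row_slack_def\<close>)
qed

lemma in_STAB2_two_cliques_sufficient:
  assumes G: "simple_graph V E" and fin: "finite C1" "finite C2" and disj: "C1 \<inter> C2 = {}"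
    and clique1: "\<forall>u\<in>C1. \<forall>v\<in>C1. u \<noteq> v \<longrightarrow> E u v"
    and clique2: "\<forall>u\<in>C2. \<forall>v\<in>C2. u \<noteq> v \<longrightarrow> E u v"
    and sym: "\<forall>i\<in>C1 \<union> C2. \<forall>j\<in>C1 \<union> C2. X i j = X j i"
    and nonneg: "\<forall>i\<in>C1 \<union> C2. \<forall>j\<in>C1 \<union> C2. X i j \<ge> 0"
    and zero: "\<forall>i\<in>C1 \<union> C2. \<forall>j\<in>C1 \<union> C2. E i j \<longrightarrow> X i j = 0"
    and row1: "\<forall>u\<in>C1. (\<Sum>v\<in>C2. X u v) \<le> X u u"
    and row2: "\<forall>v\<in>C2. (\<Sum>u\<in>C1. X u v) \<le> X v v"
    and diag: "(\<Sum>i\<in>C1 \<union> C2. X i i) \<le> 1 + (\<Sum>u\<in>C1. \<Sum>v\<in>C2. X u v)"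
  shows "in_STAB2 E (C1 \<union> C2) X"
proof -
  let ?slack = "row_slack C1 C2 X"
  define N where "N = {(u,v) \<in> C1 \<times> C2. \<not> E u v}"
  define vec :: "nat + nat \<times> nat \<Rightarrow> nat \<Rightarrow> real" where
    "vec = case_sum (\<lambda>i. indicator {i}) (\<lambda>(u,v). indicator {u,v})"
  define wt where "wt = case_sum ?slack (\<lambda>(u,v). X u v)"
  have finN: "finite N" unfolding N_def using fin by (auto intro: finite_subset)
  have on_nonedges: "(\<Sum>(u,v)\<in>N. X u v * g u v) = (\<Sum>(u,v)\<in>C1 \<times> C2. X u v * g u v)" for g
    unfolding N_def using fin zero by (intro sum.mono_neutral_left) auto
  show ?thesis
  proof (rule in_STAB2_of_subconvex_combination[where T = "(C1 \<union> C2) <+> N" and v = vec and c = wt])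
    show "finite ((C1 \<union> C2) <+> N)" using fin finN by simp
    have "\<not> E i i" and "E j i \<Longrightarrow> E i j" for i j
      using G unfolding simple_graph_def by blast+
    then show "\<forall>t\<in>(C1 \<union> C2) <+> N. vec t \<in> stable_vecs E (C1 \<union> C2)"
      unfolding vec_def N_def by (auto intro!: indicator_in_stable_vecs)
    show "\<forall>t\<in>(C1 \<union> C2) <+> N. wt t \<ge> 0"
      using row1 row2 nonneg unfolding wt_def row_slack_def N_def by auto
    have "sum wt ((C1 \<union> C2) <+> N) = sum ?slack (C1 \<union> C2) + (\<Sum>u\<in>C1. \<Sum>v\<in>C2. X u v)"
      using fin finN on_nonedges[of "\<lambda>_ _. 1"]
      by (simp add: sum.Plus wt_def sum.cartesian_product)
    then show "sum wt ((C1 \<union> C2) <+> N) \<le> 1"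
      using diag sum_row_slack[OF fin disj, of X] by linarith
    show "\<forall>p\<in>C1 \<union> C2. \<forall>q\<in>C1 \<union> C2. X p q = (\<Sum>t\<in>(C1 \<union> C2) <+> N. wt t * (vec t p * vec t q))"
    proof (intro ballI)
      fix p q assume p: "p \<in> C1 \<union> C2" and q: "q \<in> C1 \<union> C2"
      have "(\<Sum>i\<in>C1 \<union> C2. ?slack i * (indicator {i} p * indicator {i} q))
          = (\<Sum>i\<in>C1 \<union> C2. if p = i then (if p = q then ?slack p else 0) else 0)"
        by (intro sum.cong) (auto simp: indicator_def)
      also have "\<dots> = (if p = q then ?slack p else 0)"
        using fin p by simp
      finally have "(\<Sum>t\<in>(C1 \<union> C2) <+> N. wt t * (vec t p * vec t q))
          = (if p = q then ?slack p else 0)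
            + (\<Sum>(u,v)\<in>C1 \<times> C2. X u v * (indicator {u,v} p * indicator {u,v} q))"
        using fin finN on_nonedges by (simp add: sum.Plus wt_def vec_def comp_def case_prod_beta)
      then show "X p q = (\<Sum>t\<in>(C1 \<union> C2) <+> N. wt t * (vec t p * vec t q))"
        using two_cliques_entry_decomposition[OF disj p q clique1 clique2 sym zero]
          sum_pair_indicator_products[OF fin disj p q, of X]
        by simp
    qed
  qed
qed

theorem in_STAB2_two_cliques_iff:
  assumes G: "simple_graph V E" and fin: "finite C1" "finite C2" and disj: "C1 \<inter> C2 = {}"
    and clique1: "\<forall>u\<in>C1. \<forall>v\<in>C1. u \<noteq> v \<longrightarrow> E u v"
    and clique2: "\<forall>u\<in>C2. \<forall>v\<in>C2. u \<noteq> v \<longrightarrow> E u v"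
    and sym: "\<forall>i\<in>C1 \<union> C2. \<forall>j\<in>C1 \<union> C2. X i j = X j i"
    and nonneg: "\<forall>i\<in>C1 \<union> C2. \<forall>j\<in>C1 \<union> C2. X i j \<ge> 0"
    and zero: "\<forall>i\<in>C1 \<union> C2. \<forall>j\<in>C1 \<union> C2. E i j \<longrightarrow> X i j = 0"
  shows "in_STAB2 E (C1 \<union> C2) X \<longleftrightarrow>
      (\<forall>u\<in>C1. (\<Sum>v\<in>C2. X u v) \<le> X u u)
    \<and> (\<forall>v\<in>C2. (\<Sum>u\<in>C1. X u v) \<le> X v v)
    \<and> (\<Sum>i\<in>C1 \<union> C2. X i i) \<le> 1 + (\<Sum>u\<in>C1. \<Sum>v\<in>C2. X u v)"
  using in_STAB2_two_cliques_necessary[OF _ fin disj clique1 clique2]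
    in_STAB2_two_cliques_sufficient[OF assms]
  by blast

theorem lemmaC1:
  fixes n k l :: nat and E :: "nat \<Rightarrow> nat \<Rightarrow> bool" and X :: "nat \<Rightarrow> nat \<Rightarrow> real"
  assumes G: "simple_graph {1..n} E"
    and IV: "k + l \<le> n"
    and C1: "\<forall>i\<in>{1..k}. \<forall>j\<in>{1..k}. i \<noteq> j \<longrightarrow> E i j"
    and C2: "\<forall>i\<in>{k+1..k+l}. \<forall>j\<in>{k+1..k+l}. i \<noteq> j \<longrightarrow> E i j"
    and nonadj: "\<exists>i\<in>{1..k}. \<exists>j\<in>{k+1..k+l}. \<not> E i j"
    and sym: "\<forall>i\<in>{1..k+l}. \<forall>j\<in>{1..k+l}. X i j = X j i"
    and psd: "psd_on {1..k+l} X"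
    and nonneg: "\<forall>i\<in>{1..k+l}. \<forall>j\<in>{1..k+l}. X i j \<ge> 0"
    and zero: "\<forall>i\<in>{1..k+l}. \<forall>j\<in>{1..k+l}. E i j \<longrightarrow> X i j = 0"
  shows "in_STAB2 E {1..k+l} X \<longleftrightarrow>
           (\<forall>i\<in>{1..k}. (\<Sum>j=1..l. X i (k+j)) \<le> X i i)
         \<and> (\<forall>j\<in>{1..l}. (\<Sum>i=1..k. X i (k+j)) \<le> X (k+j) (k+j))
         \<and> (\<Sum>i=1..k+l. X i i) \<le> 1 + (\<Sum>i=1..k. \<Sum>j=1..l. X i (k+j))"
proof -
  have I: "{1..k+l} = {1..k} \<union> {k+1..k+l}" by auto
  have "{1..k} \<inter> {k+1..k+l} = {}" by auto
  from in_STAB2_two_cliques_iff[OF G _ _ this C1 C2] sym nonneg zero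
  have "in_STAB2 E {1..k+l} X \<longleftrightarrow>
      (\<forall>u\<in>{1..k}. (\<Sum>v\<in>{k+1..k+l}. X u v) \<le> X u u)
    \<and> (\<forall>v\<in>{k+1..k+l}. (\<Sum>u\<in>{1..k}. X u v) \<le> X v v)
    \<and> (\<Sum>i\<in>{1..k+l}. X i i) \<le> 1 + (\<Sum>u\<in>{1..k}. \<Sum>v\<in>{k+1..k+l}. X u v)"
    unfolding I by simp
  moreover have "{k+1..k+l} = plus k ` {1..l}" by (simp add: add.commute)
  ultimately show ?thesis by (simp add: sum.reindex del: image_add_atLeastAtMost)
qed

end
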